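(* Let $d:\mathcal X\times\hat{\mathcal X}\to[0,\infty)$ be a distortion function such that the matrix $[e^{-s_1d(i,j)}]_{(i,j)\in\mathcal X\times\hat{\mathcal X}}$ is full rank. Then every eigenvalue of $M$ is strictly positive, where $$M_{ij}=q^*(i)\sum_xp(x)\frac{A(x,i)A(x,j)}{\big(\sum_kq^*(k)A(x,k)\big)^2}.$$
   Context: Finite alphabets $\mathcal X=\hat{\mathcal X}$, source distribution $p$, and multipliers $s_1,s_2\ge0$. $f:(0,\infty)\to\mathbb R$ is convex with $f(1)=0$ and twice differentiable, and $D_f(p\|q)=\sum_xq(x)f(p(x)/q(x))$. $q^*$ is a fixed point achieving the rate-distortion-perception function of the implicitly defined map $$S[q](i)=q(i)\sum_xp(x)\frac{A_q(x,i)}{\sum_kq(k)A_q(x,k)},\qquad A_q(x,i)=\exp\{-s_1d(x,i)-s_2[f(p(i)/S[q](i))-\tfrac{p(i)}{S[q](i)}f'(p(i)/S[q](i))]\},$$ and $A=A_{q^*}$. *)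

theory Defs
  imports "HOL-Analysis.Analysis"
begin

text \<open>Alphabet: a finite type 'a (source and reconstruction alphabets coincide).
  Matrices are elements of real^'a^'a, rows/columns indexed by the alphabet.\<close>

definition eigenvalue_of :: "real^'n^'n \<Rightarrow> complex \<Rightarrow> bool" where
  "eigenvalue_of M \<mu> \<longleftrightarrow>
     (\<exists>v :: complex^'n. v \<noteq> 0 \<and>
        (\<chi> i j. complex_of_real (M $ i $ j)) *v v = \<mu> *s v)"

text \<open>The function A_q(x,i) with S[q] replaced by its value at the fixed point.\<close>
definition Afun :: "('a \<Rightarrow> 'a \<Rightarrow> real) \<Rightarrow> (real \<Rightarrow> real) \<Rightarrow> (real \<Rightarrow> real) \<Rightarrow> real \<Rightarrow> real
     \<Rightarrow> ('a \<Rightarrow> real) \<Rightarrow> ('a \<Rightarrow> real) \<Rightarrow> 'a \<Rightarrow> 'a \<Rightarrow> real" where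
  "Afun d f f' s1 s2 p Sq x i =
     exp (- s1 * d x i - s2 * (f (p i / Sq i) - p i / Sq i * f' (p i / Sq i)))"

text \<open>The map S[q], given the value Sq of S[q] used inside A (implicit definition).\<close>
definition Smap :: "('a::finite \<Rightarrow> 'a \<Rightarrow> real) \<Rightarrow> (real \<Rightarrow> real) \<Rightarrow> (real \<Rightarrow> real) \<Rightarrow> real \<Rightarrow> real
     \<Rightarrow> ('a \<Rightarrow> real) \<Rightarrow> ('a \<Rightarrow> real) \<Rightarrow> ('a \<Rightarrow> real) \<Rightarrow> 'a \<Rightarrow> real" where
  "Smap d f f' s1 s2 p q Sq i =
     q i * (\<Sum>x\<in>UNIV. p x * Afun d f f' s1 s2 p Sq x i /
                        (\<Sum>k\<in>UNIV. q k * Afun d f f' s1 s2 p Sq x k))"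

definition Mmat :: "('a::finite \<Rightarrow> real) \<Rightarrow> ('a \<Rightarrow> real) \<Rightarrow> ('a \<Rightarrow> 'a \<Rightarrow> real) \<Rightarrow> real^'a^'a" where
  "Mmat p q A = (\<chi> i j. q i * (\<Sum>x\<in>UNIV. p x * A x i * A x j /
                                   (\<Sum>k\<in>UNIV. q k * A x k)^2))"

end

theory Submission
  imports Defs
begin

(* M = diag q * A^T * diag K * A with K x = p x / (\<Sum>k. q k * A x k)^2 > 0. If M v = \<mu> v with
   v \<noteq> 0, pairing with diag (1/q) v gives the Rayleigh identity
     \<mu> * (\<Sum>i. |v i|^2 / q i) = \<Sum>x. K x * |(A v) x|^2,
   and A v \<noteq> 0 because A x i = exp (- s1 * d x i) * c i with c i > 0 has full rank. So \<mu> is a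
   quotient of two positive reals. *)

definition complexify :: "real^'n^'m \<Rightarrow> complex^'n^'m" where
  "complexify A = (\<chi> i j. complex_of_real (A $ i $ j))"

definition weighted_gram :: "('n::finite \<Rightarrow> real) \<Rightarrow> ('m::finite \<Rightarrow> real) \<Rightarrow> real^'n^'m \<Rightarrow> real^'n^'n"
  where "weighted_gram q K B = (\<chi> i j. q i * (\<Sum>x\<in>UNIV. K x * B $ x $ i * B $ x $ j))"

lemma complexify_nth [simp]: "complexify A $ i $ j = complex_of_real (A $ i $ j)"
  by (simp add: complexify_def)

lemma complexify_mult_vec_nth:
  "(complexify A *v v) $ i = (\<Sum>j\<in>UNIV. complex_of_real (A $ i $ j) * v $ j)"
  by (simp add: matrix_vector_mult_def)

lemma complexify_full_rank_injective:
  fixes B :: "real^'n^'m" and u :: "complex^'n"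
  assumes "rank B = CARD('n)" and "complexify B *v u = 0"
  shows "u = 0"
proof -
  have "B *v (\<chi> i. Re (u $ i)) = 0" "B *v (\<chi> i. Im (u $ i)) = 0"
    using arg_cong[OF assms(2), of "\<lambda>w. Re (w $ _)"] arg_cong[OF assms(2), of "\<lambda>w. Im (w $ _)"]
    by (simp_all add: vec_eq_iff complexify_mult_vec_nth matrix_vector_mult_def Re_sum Im_sum)
  then have "(\<chi> i. Re (u $ i)) = 0" "(\<chi> i. Im (u $ i)) = 0"
    using assms(1) matrix_nonfull_linear_equations_eq by blast+
  then show ?thesis
    by (simp add: vec_eq_iff complex_eq_iff)
qed

lemma weighted_gram_quadratic_form:
  fixes q :: "'n::finite \<Rightarrow> real" and K :: "'m::finite \<Rightarrow> real" and v :: "complex^'n"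
  assumes "\<And>i. q i \<noteq> 0"
  shows "(\<Sum>i\<in>UNIV. cnj (v $ i) / complex_of_real (q i) * (complexify (weighted_gram q K B) *v v) $ i)
       = complex_of_real (\<Sum>x\<in>UNIV. K x * (cmod ((complexify B *v v) $ x))\<^sup>2)"
proof -
  let ?w = "\<lambda>x. (complexify B *v v) $ x"
  let ?t = "\<lambda>x i j. complex_of_real (K x) *
              (complex_of_real (B $ x $ i) * cnj (v $ i)) * (complex_of_real (B $ x $ j) * v $ j)"
  have "cnj (v $ i) / complex_of_real (q i) * (complexify (weighted_gram q K B) *v v) $ i
      = (\<Sum>j\<in>UNIV. \<Sum>x\<in>UNIV. ?t x i j)" for i
  proof -
    have "cnj (v $ i) / complex_of_real (q i) * (complexify (weighted_gram q K B) *v v) $ i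
        = (\<Sum>j\<in>UNIV. cnj (v $ i) * complex_of_real (\<Sum>x\<in>UNIV. K x * B $ x $ i * B $ x $ j) * v $ j)"
      using assms[of i]
      by (simp add: complexify_mult_vec_nth weighted_gram_def sum_distrib_left field_simps)
    also have "\<dots> = (\<Sum>j\<in>UNIV. \<Sum>x\<in>UNIV. ?t x i j)"
      by (simp add: sum_distrib_left sum_distrib_right mult_ac)
    finally show ?thesis .
  qed
  then have "(\<Sum>i\<in>UNIV. cnj (v $ i) / complex_of_real (q i) * (complexify (weighted_gram q K B) *v v) $ i)
      = (\<Sum>i\<in>UNIV. \<Sum>j\<in>UNIV. \<Sum>x\<in>UNIV. ?t x i j)"
    by simp
  also have "\<dots> = (\<Sum>i\<in>UNIV. \<Sum>x\<in>UNIV. \<Sum>j\<in>UNIV. ?t x i j)"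
    by (rule sum.cong[OF refl], rule sum.swap)
  also have "\<dots> = (\<Sum>x\<in>UNIV. \<Sum>i\<in>UNIV. \<Sum>j\<in>UNIV. ?t x i j)"
    by (rule sum.swap)
  also have "\<dots> = (\<Sum>x\<in>UNIV. complex_of_real (K x) * (cnj (?w x) * ?w x))"
  proof (rule sum.cong[OF refl])
    fix x
    have w_sq: "cnj (?w x) * ?w x = (\<Sum>i\<in>UNIV. complex_of_real (B $ x $ i) * cnj (v $ i)) *
        (\<Sum>j\<in>UNIV. complex_of_real (B $ x $ j) * v $ j)"
      by (simp add: complexify_mult_vec_nth)
    show "(\<Sum>i\<in>UNIV. \<Sum>j\<in>UNIV. ?t x i j) = complex_of_real (K x) * (cnj (?w x) * ?w x)"
      unfolding w_sq sum_product by (simp only: sum_distrib_left mult.assoc)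
  qed
  also have "\<dots> = complex_of_real (\<Sum>x\<in>UNIV. K x * (cmod (?w x))\<^sup>2)"
    by (simp add: complex_norm_square[symmetric] mult.commute[of "cnj _"])
  finally show ?thesis .
qed

lemma full_rank_scale_columns:
  fixes E :: "real^'n^'m"
  assumes "rank E = CARD('n)" and "\<And>j. c j \<noteq> 0"
  shows "rank (\<chi> i j. E $ i $ j * c j) = CARD('n)"
proof -
  have "x = 0" if "(\<chi> i j. E $ i $ j * c j) *v x = 0" for x :: "real^'n"
  proof -
    have "E *v (\<chi> j. c j * x $ j) = 0"
      using that by (simp add: matrix_vector_mult_def vec_eq_iff mult_ac)
    then have "(\<chi> j. c j * x $ j) = 0"
      using assms(1) matrix_nonfull_linear_equations_eq by blast
    then show "x = 0"
      using assms(2) by (simp add: vec_eq_iff)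
  qed
  then show ?thesis
    using matrix_nonfull_linear_equations_eq by blast
qed

lemma eigenvalue_weighted_gram_pos:
  fixes q :: "'n::finite \<Rightarrow> real" and K :: "'m::finite \<Rightarrow> real" and B :: "real^'n^'m"
  assumes q_pos: "\<And>i. q i > 0" and K_pos: "\<And>x. K x > 0" and B_rank: "rank B = CARD('n)"
    and "eigenvalue_of (weighted_gram q K B) \<mu>"
  shows "\<mu> \<in> \<real> \<and> Re \<mu> > 0"
proof -
  obtain v where "v \<noteq> 0" and eigvec: "complexify (weighted_gram q K B) *v v = \<mu> *s v"
    using assms(4) unfolding eigenvalue_of_def complexify_def by blast
  define N where "N = (\<Sum>i\<in>UNIV. (cmod (v $ i))\<^sup>2 / q i)"
  define R where "R = (\<Sum>x\<in>UNIV. K x * (cmod ((complexify B *v v) $ x))\<^sup>2)"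
  have "\<mu> * complex_of_real N
      = (\<Sum>i\<in>UNIV. cnj (v $ i) / complex_of_real (q i) * (complexify (weighted_gram q K B) *v v) $ i)"
    unfolding eigvec N_def
    by (simp add: sum_distrib_left field_simps flip: complex_norm_square)
  also have "\<dots> = complex_of_real R"
    unfolding R_def using q_pos by (intro weighted_gram_quadratic_form) (metis less_irrefl)
  finally have Rayleigh: "\<mu> * complex_of_real N = complex_of_real R" .
  obtain i where "v $ i \<noteq> 0"
    using \<open>v \<noteq> 0\<close> by (metis vec_eq_iff zero_index)
  then have "N > 0"
    unfolding N_def using q_pos by (intro sum_pos2[of UNIV i]) (auto intro!: divide_nonneg_pos)
  have "complexify B *v v \<noteq> 0"
    using complexify_full_rank_injective[OF B_rank] \<open>v \<noteq> 0\<close> by blast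
  then obtain x where "(complexify B *v v) $ x \<noteq> 0"
    by (metis vec_eq_iff zero_index)
  then have "R > 0"
    unfolding R_def using K_pos by (intro sum_pos2[of UNIV x]) (auto simp: less_imp_le)
  have "\<mu> = complex_of_real (R / N)"
    using Rayleigh \<open>N > 0\<close> by (simp add: field_simps)
  then show ?thesis
    using \<open>R > 0\<close> \<open>N > 0\<close> by simp
qed

theorem lemma4:
  fixes p q :: "'a::finite \<Rightarrow> real"
    and d :: "'a \<Rightarrow> 'a \<Rightarrow> real"
    and f f' f'' :: "real \<Rightarrow> real"
    and s1 s2 :: real
  assumes p_pos: "\<And>x. p x > 0" and p_sum: "(\<Sum>x\<in>UNIV. p x) = 1"
    and q_pos: "\<And>x. q x > 0" and q_sum: "(\<Sum>x\<in>UNIV. q x) = 1"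
    and s1: "s1 \<ge> 0" and s2: "s2 \<ge> 0"
    and f_convex: "convex_on {0<..} f" and f_one: "f 1 = 0"
    and f_deriv: "\<And>t. t > 0 \<Longrightarrow> (f has_real_derivative f' t) (at t)"
    and f'_deriv: "\<And>t. t > 0 \<Longrightarrow> (f' has_real_derivative f'' t) (at t)"
    and fixed_point: "\<And>i. Smap d f f' s1 s2 p q q i = q i"
    and d_nonneg: "\<And>x y. d x y \<ge> 0"
    and full_rank: "rank ((\<chi> i j. exp (- s1 * d i j)) :: real^'a^'a) = CARD('a)"
  shows "\<forall>\<mu>. eigenvalue_of (Mmat p q (Afun d f f' s1 s2 p q)) \<mu> \<longrightarrow>
           \<mu> \<in> \<real> \<and> Re \<mu> > 0"
proof (intro allI impI)
  fix \<mu>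
  assume eig: "eigenvalue_of (Mmat p q (Afun d f f' s1 s2 p q)) \<mu>"
  define A where "A = Afun d f f' s1 s2 p q"
  define c where "c i = exp (- s2 * (f (p i / q i) - p i / q i * f' (p i / q i)))" for i
  have A_factor: "A x i = exp (- s1 * d x i) * c i" for x i
    unfolding A_def Afun_def c_def by (simp flip: exp_add)
  have A_pos: "A x i > 0" for x i
    unfolding A_factor c_def by simp
  define K where "K x = p x / (\<Sum>k\<in>UNIV. q k * A x k)\<^sup>2" for x
  have Z_pos: "(\<Sum>k\<in>UNIV. q k * A x k) > 0" for x
    using q_pos A_pos by (intro sum_pos) simp_all
  have K_pos: "K x > 0" for x
    unfolding K_def using p_pos[of x] Z_pos[of x] by simp
  have "Mmat p q A = weighted_gram q K (\<chi> x i. A x i)"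
    unfolding Mmat_def weighted_gram_def K_def by (simp add: sum_divide_distrib field_simps)
  moreover have "rank (\<chi> x i. A x i) = CARD('a)"
    using full_rank_scale_columns[OF full_rank, of c] unfolding A_factor c_def by simp
  ultimately show "\<mu> \<in> \<real> \<and> Re \<mu> > 0"
    using eigenvalue_weighted_gram_pos[OF q_pos K_pos] eig unfolding A_def by simp
qed

end
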